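(* Suppose $\{\mathcal{G}_k\}$ is uniformly jointly strongly connected with constant $B\ge1$, and consider an algorithm in $\mathcal{A}_{\rm ave}$. (i) If $\alpha_k\ge\alpha_{k+1}$ for all $k$ and $\sum_{k=0}^\infty\alpha_k^{(n-1)B}=\infty$, then global asymptotic consensus is achieved. (ii) If $\alpha_k+\eta_k\le\alpha_{k+1}+\eta_{k+1}$ for all $k$ and $\sum_{k=0}^\infty(1-\alpha_k-\eta_k)^{(n-1)B}=\infty$, then global asymptotic consensus is achieved.
   Context: Network of nodes $\mathcal{V}=\{1,\dots,n\}$, $n\ge 3$, discrete time, states $x_i(k)\in\mathbb{R}$. At each time $k$ a digraph $\mathcal{G}_k=(\mathcal{V},\mathcal{E}_k)$ is given; $j$ is a neighbor of $i$ at time $k$ if $(j,i)\in\mathcal{E}_k$, every node is always its own neighbor; $\mathcal{N}_i(k)$ is the neighbor set. The algorithm is $$x_i(k+1)=\eta_k x_i(k)+\alpha_k\min_{j\in\mathcal{N}_i(k)}x_j(k)+(1-\eta_k-\alpha_k)\max_{j\in\mathcal{N}_i(k)}x_j(k),$$ with node-independent parameters; $\mathcal{A}_{\rm ave}$ consists of those with $\eta_k\in(0,1]$, $\alpha_k\in[0,1-\eta_k]$ for all $k$. Global asymptotic consensus: for every initial time $k_0\ge0$ and initial value $x(k_0)=x^0\in\mathbb{R}^n$ there is $z_*$ with $x_i(k)\to z_*$ for all $i$. A digraph is strongly connected if every node is reachable from every other node by a directed path. $\mathcal{G}([k_1,k_2])=(\mathcal{V},\cup_{k\in[k_1,k_2]}\mathcal{E}_k)$.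 $\{\mathcal{G}_k\}$ is uniformly jointly strongly connected if there is an integer $B\ge1$ with $\mathcal{G}([k,k+B-1])$ strongly connected for all $k\ge0$. *)

theory Defs
  imports "HOL-Analysis.Analysis"
begin

text \<open>Nodes are 0,...,n-1. E k is the edge set of G_k; (j,i) in E k means j is a neighbor of i
  at time k. Every node is always its own neighbor.\<close>

definition nbrs :: "nat \<Rightarrow> (nat \<Rightarrow> (nat \<times> nat) set) \<Rightarrow> nat \<Rightarrow> nat \<Rightarrow> nat set" where
  "nbrs n E k i = {j. j < n \<and> (j, i) \<in> E k} \<union> {i}"

definition step :: "nat \<Rightarrow> (nat \<Rightarrow> (nat \<times> nat) set) \<Rightarrow> (nat \<Rightarrow> real) \<Rightarrow> (nat \<Rightarrow> real)
    \<Rightarrow> nat \<Rightarrow> (nat \<Rightarrow> real) \<Rightarrow> (nat \<Rightarrow> real)" where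
  "step n E eta alpha k x = (\<lambda>i.
     eta k * x i
     + alpha k * Min (x ` nbrs n E k i)
     + (1 - eta k - alpha k) * Max (x ` nbrs n E k i))"

text \<open>Trajectory started at time k0 from x0: traj ... k0 x0 m = x(k0 + m).\<close>
fun traj :: "nat \<Rightarrow> (nat \<Rightarrow> (nat \<times> nat) set) \<Rightarrow> (nat \<Rightarrow> real) \<Rightarrow> (nat \<Rightarrow> real)
    \<Rightarrow> nat \<Rightarrow> (nat \<Rightarrow> real) \<Rightarrow> nat \<Rightarrow> (nat \<Rightarrow> real)" where
  "traj n E eta alpha k0 x0 0 = x0"
| "traj n E eta alpha k0 x0 (Suc m) = step n E eta alpha (k0 + m) (traj n E eta alpha k0 x0 m)"

definition in_A_ave :: "(nat \<Rightarrow> real) \<Rightarrow> (nat \<Rightarrow> real) \<Rightarrow> bool" where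
  "in_A_ave eta alpha \<longleftrightarrow> (\<forall>k. 0 < eta k \<and> eta k \<le> 1 \<and> 0 \<le> alpha k \<and> alpha k \<le> 1 - eta k)"

definition global_consensus :: "nat \<Rightarrow> (nat \<Rightarrow> (nat \<times> nat) set) \<Rightarrow> (nat \<Rightarrow> real) \<Rightarrow> (nat \<Rightarrow> real) \<Rightarrow> bool" where
  "global_consensus n E eta alpha \<longleftrightarrow>
     (\<forall>k0 x0. \<exists>z. \<forall>i<n. (\<lambda>m. traj n E eta alpha k0 x0 m i) \<longlonglongrightarrow> z)"

definition strongly_connected :: "nat \<Rightarrow> (nat \<times> nat) set \<Rightarrow> bool" where
  "strongly_connected n A \<longleftrightarrow>
     (\<forall>i<n. \<forall>j<n. (i, j) \<in> (A \<inter> ({..<n} \<times> {..<n}))\<^sup>*)"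

definition union_graph :: "(nat \<Rightarrow> (nat \<times> nat) set) \<Rightarrow> nat \<Rightarrow> nat \<Rightarrow> (nat \<times> nat) set" where
  "union_graph E k1 k2 = (\<Union>k\<in>{k1..k2}. E k)"

definition UJSC :: "nat \<Rightarrow> (nat \<Rightarrow> (nat \<times> nat) set) \<Rightarrow> nat \<Rightarrow> bool" where
  "UJSC n E B \<longleftrightarrow> B \<ge> 1 \<and> (\<forall>k. strongly_connected n (union_graph E k (k + B - 1)))"

end

theory Submission
  imports Defs
begin

(*
  Write x(m) for the trajectory and upper(m), lower(m) for the maximum and minimum of its
  entries. Every update is a convex combination of neighbour values, so upper decreases and
  lower increases; consensus therefore amounts to the spread upper - lower tending to zero.

  Consider a window of L = (n-1)B steps starting at time s and let a be a lower
  bound of alpha on it. Call a node lagging at step r if it lies at least a^r (upper(s) - lower(s))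
  below upper(s). Since the Min-term carries weight alpha, lagging spreads from a node to all of
  its out-neighbours in one step, and nodes stay lagging. Starting from the node realizing
  lower(s), strong connectivity of every B-window makes the lagging set grow strictly every B
  steps, so after L steps every node lags: the spread contracts by the factor 1 - a^L.
  A telescoping argument turns non-summability of these factors into spread -> 0.

  Part (ii) reduces to part (i): negating all states exchanges Min and Max, i.e. replaces
  alpha by 1 - eta - alpha.
*)

lemma summable_from_samples:
  fixes f :: "nat \<Rightarrow> real"
  assumes nonneg: "\<And>k. 0 \<le> f k" and dec: "\<And>k. f (Suc k) \<le> f k"
    and L: "L \<ge> 1" and samples: "summable (\<lambda>j. f (j * L))"
  shows "summable f"
proof (rule summableI_nonneg_bounded)
  fix N
  have f_anti: "f k' \<le> f k" if "k \<le> k'" for k k'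
    using lift_Suc_antimono_le[of f, OF dec that] .
  have "(\<Sum>k<N. f k) \<le> (\<Sum>k<N * L. f k)"
    using L nonneg by (intro sum_mono2) auto
  also have "\<dots> = (\<Sum>m<N. \<Sum>k\<in>{m * L..<m * L + L}. f k)"
    by (rule sum.nat_group[symmetric])
  also have "\<dots> \<le> (\<Sum>m<N. \<Sum>k\<in>{m * L..<m * L + L}. f (m * L))"
    by (intro sum_mono) (auto intro: f_anti)
  also have "\<dots> = real L * (\<Sum>m<N. f (m * L))"
    by (simp add: sum_distrib_left)
  also have "\<dots> \<le> real L * (\<Sum>m. f (m * L))"
    using samples nonneg by (intro mult_left_mono sum_le_suminf) auto
  finally show "(\<Sum>k<N. f k) \<le> real L * (\<Sum>m. f (m * L))" .
qed (use nonneg in auto)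

lemma block_contraction_tendsto_zero:
  fixes D c :: "nat \<Rightarrow> real"
  assumes dec: "decseq D" and D_nonneg: "\<And>m. 0 \<le> D m" and c_nonneg: "\<And>j. 0 \<le> c j"
    and contract: "\<And>j. D (Suc j * L) \<le> (1 - c j) * D (j * L)"
    and diverge: "\<not> summable c"
  shows "D \<longlonglongrightarrow> 0"
proof -
  obtain d where lim: "D \<longlonglongrightarrow> d" and d_le: "\<And>m. d \<le> D m"
    using decseq_convergent[OF dec, of 0] D_nonneg by blast
  have "d = 0"
  proof (rule ccontr)
    assume "d \<noteq> 0"
    with d_le[of 0] D_nonneg[of 0] lim have d_pos: "0 < d"
      using LIMSEQ_le_const[OF lim, of 0] D_nonneg by force
    have telescope: "D (t * L) + d * (\<Sum>j<t. c j) \<le> D 0" for t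
    proof (induction t)
      case (Suc t)
      have "c t * d \<le> c t * D (t * L)"
        using d_le c_nonneg by (intro mult_left_mono) auto
      then show ?case
        using contract[of t] Suc.IH by (simp add: algebra_simps)
    qed simp
    have "d * (\<Sum>j<t. c j) \<le> D 0" for t
      using telescope[of t] D_nonneg[of "t * L"] by linarith
    then have "(\<Sum>j<t. c j) \<le> D 0 / d" for t
      using d_pos by (simp add: pos_le_divide_eq mult.commute)
    then have "summable c"
      using c_nonneg by (intro summableI_nonneg_bounded)
    with diverge show False ..
  qed
  with lim show ?thesis by simp
qed

lemma nbrs_facts:
  assumes "i < n"
  shows "finite (nbrs n E k i)" "i \<in> nbrs n E k i" "nbrs n E k i \<subseteq> {..<n}"
  using assms unfolding nbrs_def by auto

lemma in_A_aveD:
  assumes "in_A_ave eta alpha"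
  shows "0 < eta k" "eta k \<le> 1" "0 \<le> alpha k" "alpha k \<le> 1 - eta k"
  using assms unfolding in_A_ave_def by auto

lemma convex3_in_range:
  fixes p q u v w lo hi :: real
  assumes "0 \<le> p" "0 \<le> q" "p + q \<le> 1"
    and "lo \<le> u" "u \<le> hi" "lo \<le> v" "v \<le> hi" "lo \<le> w" "w \<le> hi"
  shows "lo \<le> p * u + q * v + (1 - p - q) * w \<and> p * u + q * v + (1 - p - q) * w \<le> hi"
proof -
  have "p * lo \<le> p * u" "p * u \<le> p * hi" "q * lo \<le> q * v" "q * v \<le> q * hi"
    "(1 - p - q) * lo \<le> (1 - p - q) * w" "(1 - p - q) * w \<le> (1 - p - q) * hi"
    using assms by (simp_all add: mult_left_mono)
  then show ?thesis by (simp add: algebra_simps)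
qed

(* A step is a convex combination of neighbour values, so it preserves every interval
   containing all states. *)
lemma step_in_range:
  assumes A: "in_A_ave eta alpha" and i: "i < n"
    and range: "\<And>l. l < n \<Longrightarrow> lo \<le> y l \<and> y l \<le> hi"
  shows "lo \<le> step n E eta alpha k y i \<and> step n E eta alpha k y i \<le> hi"
proof -
  let ?N = "y ` nbrs n E k i"
  have fin: "finite ?N" and ne: "?N \<noteq> {}"
    using nbrs_facts(1,2)[OF i, of E k] by auto
  have N_range: "lo \<le> v \<and> v \<le> hi" if "v \<in> ?N" for v
    using that range nbrs_facts(3)[OF i] by auto
  have "lo \<le> Min ?N \<and> Min ?N \<le> hi" "lo \<le> Max ?N \<and> Max ?N \<le> hi" "lo \<le> y i \<and> y i \<le> hi"
    using N_range Min_in[OF fin ne] Max_in[OF fin ne] range i by auto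
  then show ?thesis
    unfolding step_def using in_A_aveD[OF A, of k] by (intro convex3_in_range) auto
qed

(* If the node j feeds into node i, node i drops below any upper bound U by at least alpha
   times the distance of j below U: this is how a gap propagates along an edge. *)
lemma step_gap:
  assumes A: "in_A_ave eta alpha" and i: "i < n" and j: "j \<in> nbrs n E k i"
    and U: "\<And>l. l < n \<Longrightarrow> y l \<le> U"
  shows "alpha k * (U - y j) \<le> U - step n E eta alpha k y i"
proof -
  let ?N = "y ` nbrs n E k i"
  have fin: "finite ?N" and ne: "?N \<noteq> {}"
    using nbrs_facts(1,2)[OF i, of E k] by auto
  have min_le: "Min ?N \<le> y j" using fin j by simp
  have max_le: "Max ?N \<le> U" using fin ne U nbrs_facts(3)[OF i] by (auto simp: Max_le_iff)
  have "U - step n E eta alpha k y i = eta k * (U - y i) + alpha k * (U - Min ?N)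
      + (1 - eta k - alpha k) * (U - Max ?N)"
    unfolding step_def by (simp add: algebra_simps)
  moreover have "0 \<le> eta k * (U - y i)" using in_A_aveD[OF A, of k] U[OF i] by simp
  moreover have "alpha k * (U - y j) \<le> alpha k * (U - Min ?N)"
    using in_A_aveD[OF A, of k] min_le by (intro mult_left_mono) auto
  moreover have "0 \<le> (1 - eta k - alpha k) * (U - Max ?N)"
    using in_A_aveD[OF A, of k] max_le by simp
  ultimately show ?thesis by linarith
qed

section \<open>Reflection: negating the states swaps the roles of Min and Max\<close>

lemma in_A_ave_reflect:
  "in_A_ave eta alpha \<Longrightarrow> in_A_ave eta (\<lambda>k. 1 - eta k - alpha k)"
  unfolding in_A_ave_def by auto

lemma step_reflect:
  "step n E eta (\<lambda>k. 1 - eta k - alpha k) k (\<lambda>i. - y i) = (\<lambda>i. - step n E eta alpha k y i)"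
proof
  fix i
  let ?N = "y ` nbrs n E k i"
  have fin: "finite ?N" and ne: "?N \<noteq> {}" unfolding nbrs_def by auto
  have image: "(\<lambda>j. - y j) ` nbrs n E k i = uminus ` ?N" by (simp add: image_image)
  have "Min ((\<lambda>j. - y j) ` nbrs n E k i) = - Max ?N"
    "Max ((\<lambda>j. - y j) ` nbrs n E k i) = - Min ?N"
    unfolding image using minus_Max_eq_Min[OF fin ne] minus_Min_eq_Max[OF fin ne] by simp_all
  then show "step n E eta (\<lambda>k. 1 - eta k - alpha k) k (\<lambda>i. - y i) i = - step n E eta alpha k y i"
    unfolding step_def by (simp add: algebra_simps)
qed

lemma traj_reflect:
  "traj n E eta (\<lambda>k. 1 - eta k - alpha k) k0 (\<lambda>i. - x0 i) m = (\<lambda>i. - traj n E eta alpha k0 x0 m i)"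
  by (induction m) (simp_all add: step_reflect)

lemma global_consensus_reflect:
  assumes "global_consensus n E eta (\<lambda>k. 1 - eta k - alpha k)"
  shows "global_consensus n E eta alpha"
  unfolding global_consensus_def
proof (intro allI)
  fix k0 x0
  obtain z where z: "\<forall>i<n. (\<lambda>m. traj n E eta (\<lambda>k. 1 - eta k - alpha k) k0 (\<lambda>i. - x0 i) m i) \<longlonglongrightarrow> z"
    using assms unfolding global_consensus_def by blast
  have "(\<lambda>m. traj n E eta alpha k0 x0 m i) \<longlonglongrightarrow> - z" if "i < n" for i
  proof -
    have "(\<lambda>m. - traj n E eta alpha k0 x0 m i) \<longlonglongrightarrow> z"
      using z that unfolding traj_reflect by simp
    from tendsto_minus[OF this] show ?thesis by simp
  qed
  then show "\<exists>z. \<forall>i<n. (\<lambda>m. traj n E eta alpha k0 x0 m i) \<longlonglongrightarrow> z" by blast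
qed

lemma rtrancl_exit_edge:
  assumes "(a, b) \<in> R\<^sup>*" "a \<in> S" "b \<notin> S"
  shows "\<exists>u v. (u, v) \<in> R \<and> u \<in> S \<and> v \<notin> S"
  using assms by (induction rule: rtrancl_induct) auto

context
  fixes n :: nat and E :: "nat \<Rightarrow> (nat \<times> nat) set" and eta alpha :: "nat \<Rightarrow> real"
    and k0 :: nat and x0 :: "nat \<Rightarrow> real"
  assumes n_pos: "0 < n" and A: "in_A_ave eta alpha"
begin

abbreviation state :: "nat \<Rightarrow> nat \<Rightarrow> real" where
  "state \<equiv> traj n E eta alpha k0 x0"

definition upper :: "nat \<Rightarrow> real" where
  "upper m = Max (state m ` {..<n})"

definition lower :: "nat \<Rightarrow> real" where
  "lower m = Min (state m ` {..<n})"

lemma state_bounds: "i < n \<Longrightarrow> lower m \<le> state m i \<and> state m i \<le> upper m"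
  unfolding upper_def lower_def by simp

lemma lower_le_upper: "lower m \<le> upper m"
  using state_bounds[OF n_pos] by (meson order_trans)

(* By step_in_range the interval [lower m, upper m] contains the next state. *)
lemma upper_lower_step: "upper (Suc m) \<le> upper m" "lower m \<le> lower (Suc m)"
proof -
  have bounds: "lower m \<le> state (Suc m) i \<and> state (Suc m) i \<le> upper m" if "i < n" for i
    using step_in_range[OF A that state_bounds] by simp
  have ne: "state (Suc m) ` {..<n} \<noteq> {}" using n_pos by blast
  show "upper (Suc m) \<le> upper m"
    unfolding upper_def[of "Suc m"] by (subst Max_le_iff[OF _ ne]) (use bounds in auto)
  show "lower m \<le> lower (Suc m)"
    unfolding lower_def[of "Suc m"] by (subst Min_ge_iff[OF _ ne]) (use bounds in auto)
qed

lemma upper_decseq: "decseq upper"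
  by (rule decseq_SucI) (rule upper_lower_step)

lemma lower_incseq: "incseq lower"
  by (rule incseq_SucI) (rule upper_lower_step)

lemma spread_decseq: "decseq (\<lambda>m. upper m - lower m)"
  unfolding decseq_def using decseqD[OF upper_decseq] incseqD[OF lower_incseq] by (meson diff_mono)

(* Spread tending to zero yields consensus, since upper and lower are monotone and
   enclose every state. *)
lemma consensus_of_spread:
  assumes spread: "(\<lambda>m. upper m - lower m) \<longlonglongrightarrow> 0"
  shows "\<exists>z. \<forall>i<n. (\<lambda>m. state m i) \<longlonglongrightarrow> z"
proof -
  have "lower 0 \<le> upper m" for m
    using incseqD[OF lower_incseq, of 0 m] lower_le_upper[of m] by linarith
  then obtain z where upper_lim: "upper \<longlonglongrightarrow> z"
    using decseq_convergent[OF upper_decseq] by blast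
  have "(\<lambda>m. upper m - (upper m - lower m)) \<longlonglongrightarrow> z - 0"
    using upper_lim spread by (rule tendsto_diff)
  then have lower_lim: "lower \<longlonglongrightarrow> z" by simp
  have "(\<lambda>m. state m i) \<longlonglongrightarrow> z" if "i < n" for i
    using state_bounds[OF that]
    by (intro tendsto_sandwich[OF _ _ lower_lim upper_lim]) (auto intro: always_eventually)
  then show ?thesis by blast
qed

subsection \<open>Contraction over one window of (n - 1) B steps\<close>

context
  fixes B s :: nat and a :: real
  assumes UJ: "UJSC n E B"
    and a_nonneg: "0 \<le> a" and a_le_alpha: "\<And>r. r < (n - 1) * B \<Longrightarrow> a \<le> alpha (k0 + s + r)"
begin

definition lagging :: "nat \<Rightarrow> nat set" where
  "lagging r = {i. i < n \<and> a ^ r * (upper s - lower s) \<le> upper s - state (s + r) i}"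

lemma lagging_subset: "lagging r \<subseteq> {..<n}"
  unfolding lagging_def by auto

(* One update propagates lagging along an edge (j, i): this is where the Min-term and
   the lower bound a of alpha enter. *)
lemma lagging_spreads:
  assumes r: "r < (n - 1) * B" and j: "j \<in> lagging r" and i: "i < n"
    and edge: "j \<in> nbrs n E (k0 + s + r) i"
  shows "i \<in> lagging (Suc r)"
proof -
  let ?U = "upper s" and ?y = "state (s + r)"
  have below_U: "?y l \<le> ?U" if "l < n" for l
    using state_bounds[OF that, of "s + r"] decseqD[OF upper_decseq, of s "s + r"] by simp
  have "a * (a ^ r * (?U - lower s)) \<le> a * (?U - ?y j)"
    using j a_nonneg unfolding lagging_def by (auto intro: mult_left_mono)
  also have "\<dots> \<le> alpha (k0 + (s + r)) * (?U - ?y j)"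
    using a_le_alpha[OF r] below_U[of j] j unfolding lagging_def
    by (intro mult_right_mono) (auto simp: add.assoc)
  also have "\<dots> \<le> ?U - state (Suc (s + r)) i"
    using step_gap[OF A i edge below_U] by (simp add: add.assoc)
  finally show ?thesis using i unfolding lagging_def by simp
qed

(* Since every node is its own neighbour, lagging nodes stay lagging. *)
lemma lagging_mono:
  assumes "r \<le> r'" "r' \<le> (n - 1) * B"
  shows "lagging r \<subseteq> lagging r'"
  using assms
proof (induction r' rule: dec_induct)
  case (step q)
  have "i \<in> lagging (Suc q)" if "i \<in> lagging q" for i
    using lagging_spreads[of q i i] nbrs_facts(2)[of i n] lagging_subset[of q] that step by auto
  then show ?case using step by auto
qed simp

(* Strong connectivity of the B-window starting at step r lets the lagging set escape. *)
lemma lagging_grows: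
  assumes window: "r + B \<le> (n - 1) * B"
    and nonempty: "lagging r \<noteq> {}" and not_all: "lagging r \<noteq> {..<n}"
  shows "lagging r \<subset> lagging (r + B)"
proof -
  have B_pos: "1 \<le> B" using UJ unfolding UJSC_def by simp
  have connected: "strongly_connected n (union_graph E (k0 + s + r) (k0 + s + r + B - 1))"
    using UJ unfolding UJSC_def by simp
  obtain j where j: "j \<in> lagging r" using nonempty by auto
  obtain i where i: "i < n" "i \<notin> lagging r" using not_all lagging_subset by auto
  have j_lt: "j < n" using j lagging_subset by auto
  define R where "R = union_graph E (k0 + s + r) (k0 + s + r + B - 1) \<inter> ({..<n} \<times> {..<n})"
  have "(j, i) \<in> R\<^sup>*"
    using connected j_lt i(1) unfolding strongly_connected_def R_def by simp
  then obtain u v where uv: "(u, v) \<in> R" "u \<in> lagging r" "v \<notin> lagging r"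
    using rtrancl_exit_edge[OF _ j i(2)] by blast
  then have uv_lt: "u < n" "v < n" and "(u, v) \<in> union_graph E (k0 + s + r) (k0 + s + r + B - 1)"
    unfolding R_def by auto
  then obtain kk where kk: "k0 + s + r \<le> kk" "kk \<le> k0 + s + r + B - 1" "(u, v) \<in> E kk"
    unfolding union_graph_def by auto
  define q where "q = kk - (k0 + s)"
  have q: "r \<le> q" "q < (n - 1) * B" "Suc q \<le> r + B" "kk = k0 + s + q"
    using kk(1,2) B_pos window unfolding q_def by linarith+
  have "u \<in> lagging q" using lagging_mono[of r q] q(1,2) uv(2) by auto
  moreover have "u \<in> nbrs n E (k0 + s + q) v" using kk(3) q(4) uv_lt unfolding nbrs_def by auto
  ultimately have "v \<in> lagging (Suc q)" using lagging_spreads[OF q(2) _ uv_lt(2)] by blast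
  then have "v \<in> lagging (r + B)" using lagging_mono[of "Suc q" "r + B"] q(3) window by blast
  moreover have "lagging r \<subseteq> lagging (r + B)" using lagging_mono[OF le_add1 window] .
  ultimately show ?thesis using uv(3) by blast
qed

(* The node realizing lower s lags from the start, and the lagging set gains a node
   in each of the n - 1 B-windows, so eventually all nodes lag. *)
lemma lagging_all: "lagging ((n - 1) * B) = {..<n}"
proof -
  have fin: "finite (lagging r)" for r using lagging_subset finite_subset by blast
  have card_lagging: "t + 1 \<le> card (lagging (t * B))" if "t \<le> n - 1" for t
    using that
  proof (induction t)
    case 0
    have "lower s \<in> state s ` {..<n}"
      unfolding lower_def using n_pos by (intro Min_in) auto
    then obtain i0 where "i0 < n" "state s i0 = lower s" by auto
    then have "i0 \<in> lagging 0" unfolding lagging_def by simp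
    then have "lagging 0 \<noteq> {}" by blast
    then show ?case using fin[of 0] by (simp add: Suc_le_eq card_gt_0_iff)
  next
    case (Suc t)
    have window: "t * B + B \<le> (n - 1) * B"
      using mult_le_mono1[OF Suc.prems, of B] by simp
    have next_window: "Suc t * B = t * B + B" by simp
    have IH: "t + 1 \<le> card (lagging (t * B))" using Suc by simp
    show ?case
    proof (cases "lagging (t * B) = {..<n}")
      case True
      then have "lagging (t * B + B) = {..<n}"
        using lagging_mono[OF le_add1 window] lagging_subset[of "t * B + B"] by blast
      then show ?thesis using Suc.prems unfolding next_window by simp
    next
      case False
      have "lagging (t * B) \<noteq> {}" using IH by auto
      then have "lagging (t * B) \<subset> lagging (t * B + B)"
        using lagging_grows[OF window _ False] by blast
      then have "card (lagging (t * B)) < card (lagging (t * B + B))"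
        using fin by (rule psubset_card_mono[rotated])
      then show ?thesis using IH unfolding next_window by simp
    qed
  qed
  have "n \<le> card (lagging ((n - 1) * B))" using card_lagging[of "n - 1"] n_pos by simp
  then show ?thesis using lagging_subset by (intro card_seteq) auto
qed

lemma window_contraction:
  "upper (s + (n - 1) * B) - lower (s + (n - 1) * B)
     \<le> (1 - a ^ ((n - 1) * B)) * (upper s - lower s)"
proof -
  let ?L = "(n - 1) * B"
  have below: "state (s + ?L) i \<le> upper s - a ^ ?L * (upper s - lower s)" if "i < n" for i
  proof -
    have "i \<in> lagging ?L" using that lagging_all by simp
    then show ?thesis unfolding lagging_def by simp
  qed
  have ne: "state (s + ?L) ` {..<n} \<noteq> {}" using n_pos by blast
  have "upper (s + ?L) \<le> upper s - a ^ ?L * (upper s - lower s)"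
    unfolding upper_def[of "s + ?L"] Max_le_iff[OF finite_imageI[OF finite_lessThan] ne]
    using below by blast
  moreover have "lower s \<le> lower (s + ?L)" using incseqD[OF lower_incseq] by simp
  ultimately show ?thesis by (simp add: algebra_simps)
qed

end

(* Part (i) for a fixed initial condition: windows of length L = (n-1)B starting at
   multiples of L contract with factors 1 - alpha(k0 + (j+1)L)^L, which are not summable. *)
lemma spread_tendsto_zero:
  assumes n2: "2 \<le> n" and UJ: "UJSC n E B"
    and alpha_dec: "\<And>k. alpha (Suc k) \<le> alpha k"
    and diverge: "\<not> summable (\<lambda>k. alpha k ^ ((n - 1) * B))"
  shows "(\<lambda>m. upper m - lower m) \<longlonglongrightarrow> 0"
proof -
  define L where "L = (n - 1) * B"
  have L_pos: "1 \<le> L" using n2 UJ unfolding L_def UJSC_def by simp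
  have alpha_nonneg: "0 \<le> alpha k" for k using in_A_aveD[OF A] by simp
  define f where "f k = alpha (k0 + k) ^ L" for k
  have f_nonneg: "0 \<le> f k" for k unfolding f_def using alpha_nonneg by simp
  have f_dec: "f (Suc k) \<le> f k" for k
    unfolding f_def using alpha_dec[of "k0 + k"] alpha_nonneg by (simp add: power_mono)
  have diverge_c: "\<not> summable (\<lambda>j. f (Suc j * L))"
  proof
    assume "summable (\<lambda>j. f (Suc j * L))"
    then have "summable (\<lambda>j. f (j * L))" by (subst summable_Suc_iff[symmetric]) simp
    then have "summable f" by (rule summable_from_samples[where f = f, OF f_nonneg f_dec L_pos])
    then have "summable (\<lambda>k. alpha (k + k0) ^ L)" unfolding f_def by (simp add: add.commute)
    with diverge show False unfolding L_def using summable_iff_shift by blast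
  qed
  have contract: "upper (Suc j * L) - lower (Suc j * L)
      \<le> (1 - f (Suc j * L)) * (upper (j * L) - lower (j * L))" for j
  proof -
    have a_le: "alpha (k0 + (j * L + L)) \<le> alpha (k0 + j * L + r)" if "r < (n - 1) * B" for r
    proof -
      have "k0 + j * L + r \<le> k0 + (j * L + L)" using that unfolding L_def by linarith
      then show ?thesis by (rule lift_Suc_antimono_le[of alpha, OF alpha_dec])
    qed
    have "upper (j * L + (n - 1) * B) - lower (j * L + (n - 1) * B)
        \<le> (1 - alpha (k0 + (j * L + L)) ^ ((n - 1) * B)) * (upper (j * L) - lower (j * L))"
      by (rule window_contraction[where B = B and s = "j * L" and a = "alpha (k0 + (j * L + L))"])
         (use UJ alpha_nonneg a_le in auto)
    moreover have next_block: "Suc j * L = j * L + L" by simp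
    ultimately show ?thesis unfolding f_def next_block unfolding L_def by simp
  qed
  show ?thesis
    by (rule block_contraction_tendsto_zero[OF spread_decseq _ _ contract diverge_c])
       (simp_all add: lower_le_upper f_nonneg)
qed

end

(* Part (i) of the corollary, valid already for n >= 2. *)
lemma consensus_decreasing_alpha:
  assumes "n \<ge> 2" "UJSC n E B" "in_A_ave eta alpha"
    and "\<And>k. alpha (Suc k) \<le> alpha k" "\<not> summable (\<lambda>k. alpha k ^ ((n - 1) * B))"
  shows "global_consensus n E eta alpha"
  unfolding global_consensus_def
proof (intro allI)
  fix k0 x0
  have n_pos: "0 < n" using assms(1) by simp
  show "\<exists>z. \<forall>i<n. (\<lambda>m. traj n E eta alpha k0 x0 m i) \<longlonglongrightarrow> z"
    by (rule consensus_of_spread[OF n_pos assms(3) spread_tendsto_zero[OF n_pos assms(3) assms(1,2,4,5)]])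
qed

theorem corollary2:
  fixes n B :: nat and E :: "nat \<Rightarrow> (nat \<times> nat) set" and eta alpha :: "nat \<Rightarrow> real"
  assumes "n \<ge> 3"
    and "UJSC n E B"
    and "in_A_ave eta alpha"
  shows "((\<forall>k. alpha k \<ge> alpha (Suc k)) \<and> \<not> summable (\<lambda>k. alpha k ^ ((n - 1) * B))
            \<longrightarrow> global_consensus n E eta alpha)
       \<and> ((\<forall>k. alpha k + eta k \<le> alpha (Suc k) + eta (Suc k))
            \<and> \<not> summable (\<lambda>k. (1 - alpha k - eta k) ^ ((n - 1) * B))
            \<longrightarrow> global_consensus n E eta alpha)"
proof (intro conjI impI)
  have n2: "n \<ge> 2" using assms(1) by simp
  show "global_consensus n E eta alpha"
    if "(\<forall>k. alpha k \<ge> alpha (Suc k)) \<and> \<not> summable (\<lambda>k. alpha k ^ ((n - 1) * B))"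
    using consensus_decreasing_alpha[OF n2 assms(2,3)] that by blast
  show "global_consensus n E eta alpha"
    if "(\<forall>k. alpha k + eta k \<le> alpha (Suc k) + eta (Suc k))
        \<and> \<not> summable (\<lambda>k. (1 - alpha k - eta k) ^ ((n - 1) * B))"
  proof (rule global_consensus_reflect)
    let ?beta = "\<lambda>k. 1 - eta k - alpha k"
    have "alpha k + eta k \<le> alpha (Suc k) + eta (Suc k)" for k using that by blast
    then have "?beta (Suc k) \<le> ?beta k" for k by (simp add: algebra_simps)
    moreover have "\<not> summable (\<lambda>k. ?beta k ^ ((n - 1) * B))"
      using that by (simp add: algebra_simps)
    ultimately show "global_consensus n E eta ?beta"
      using consensus_decreasing_alpha[OF n2 assms(2) in_A_ave_reflect[OF assms(3)]] by blast
  qed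
qed

end
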